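(* The subalgebra of $U^+$ generated by $e_2,w,e_3$ and the subalgebra of $U^+$ generated by $e_1,\overline{e_3},\overline w$ are not isomorphic as $\Bbbk$-algebras.
   Context: $\Bbbk$ is an algebraically closed field of characteristic zero and $q\in\Bbbk^\times$ is not a root of unity. $U^+$ is the $\Bbbk$-algebra generated by $e_1,e_2$ with relations (S1) $e_1^2e_2-(q^2+q^{-2})e_1e_2e_1+e_2e_1^2=0$ and (S2) $e_2^3e_1-(q^2+1+q^{-2})e_2^2e_1e_2+(q^2+1+q^{-2})e_2e_1e_2^2-e_1e_2^3=0$. Set $e_3=e_1e_2-q^2e_2e_1$, $w=e_2e_3-e_3e_2$, $\overline{e_3}=e_1e_2-q^{-2}e_2e_1$, $\overline w=e_2\overline{e_3}-\overline{e_3}e_2$. *)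

theory Defs
  imports "HOL-Computational_Algebra.Polynomial"
begin

text \<open>Free associative algebra k<x_0, x_1> over a field: an element is a coefficient
function on words (lists of variable indices); elements of the algebra are the
finitely supported ones (nc_alg).\<close>

type_synonym 'k nca = "nat list \<Rightarrow> 'k"

definition nc_zero :: "'k::field nca" where "nc_zero = (\<lambda>w. 0)"
definition nc_one :: "'k::field nca" where "nc_one = (\<lambda>w. if w = [] then 1 else 0)"
definition nc_var :: "nat \<Rightarrow> 'k::field nca" where "nc_var i = (\<lambda>w. if w = [i] then 1 else 0)"
definition nc_add :: "'k::field nca \<Rightarrow> 'k nca \<Rightarrow> 'k nca" where "nc_add f g = (\<lambda>w. f w + g w)"
definition nc_diff :: "'k::field nca \<Rightarrow> 'k nca \<Rightarrow> 'k nca" where "nc_diff f g = (\<lambda>w. f w - g w)"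
definition nc_smult :: "'k::field \<Rightarrow> 'k nca \<Rightarrow> 'k nca" where "nc_smult c f = (\<lambda>w. c * f w)"
definition nc_mult :: "'k::field nca \<Rightarrow> 'k nca \<Rightarrow> 'k nca" where
  "nc_mult f g = (\<lambda>w. \<Sum>i\<le>length w. f (take i w) * g (drop i w))"
definition nc_alg :: "'k::field nca set" where "nc_alg = {f. finite {w. f w \<noteq> 0}}"

inductive_set nc_ideal :: "'k::field nca set \<Rightarrow> 'k nca set" for R where
  gen: "r \<in> R \<Longrightarrow> r \<in> nc_ideal R"
| zero: "nc_zero \<in> nc_ideal R"
| add: "a \<in> nc_ideal R \<Longrightarrow> b \<in> nc_ideal R \<Longrightarrow> nc_add a b \<in> nc_ideal R"
| smult: "a \<in> nc_ideal R \<Longrightarrow> nc_smult c a \<in> nc_ideal R"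
| lmult: "a \<in> nc_alg \<Longrightarrow> b \<in> nc_ideal R \<Longrightarrow> nc_mult a b \<in> nc_ideal R"
| rmult: "a \<in> nc_ideal R \<Longrightarrow> b \<in> nc_alg \<Longrightarrow> nc_mult a b \<in> nc_ideal R"

inductive_set nc_subalg :: "'k::field nca set \<Rightarrow> 'k nca set" for G where
  one: "nc_one \<in> nc_subalg G"
| gen: "g \<in> G \<Longrightarrow> g \<in> nc_subalg G"
| add: "a \<in> nc_subalg G \<Longrightarrow> b \<in> nc_subalg G \<Longrightarrow> nc_add a b \<in> nc_subalg G"
| smult: "a \<in> nc_subalg G \<Longrightarrow> nc_smult c a \<in> nc_subalg G"
| mult: "a \<in> nc_subalg G \<Longrightarrow> b \<in> nc_subalg G \<Longrightarrow> nc_mult a b \<in> nc_subalg G"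

text \<open>Congruence modulo the ideal generated by R (i.e. equality in the quotient algebra).\<close>
definition nc_cong :: "'k::field nca set \<Rightarrow> 'k nca \<Rightarrow> 'k nca \<Rightarrow> bool" where
  "nc_cong R x y \<longleftrightarrow> nc_diff x y \<in> nc_ideal R"

text \<open>For subsets S1, S2 of the free algebra, the images of S1 and S2 in the quotient
by the ideal generated by R are isomorphic as k-algebras: phi on representatives
induces a well-defined, injective, surjective, unital k-algebra homomorphism.\<close>
definition nc_quot_iso :: "'k::field nca set \<Rightarrow> 'k nca set \<Rightarrow> 'k nca set \<Rightarrow> bool" where
  "nc_quot_iso R S1 S2 \<longleftrightarrow> (\<exists>\<phi>.
     (\<forall>x\<in>S1. \<phi> x \<in> S2) \<and>
     (\<forall>x\<in>S1. \<forall>y\<in>S1. nc_cong R x y \<longleftrightarrow> nc_cong R (\<phi> x) (\<phi> y)) \<and>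
     (\<forall>z\<in>S2. \<exists>x\<in>S1. nc_cong R z (\<phi> x)) \<and>
     nc_cong R (\<phi> nc_one) nc_one \<and>
     (\<forall>x\<in>S1. \<forall>y\<in>S1. nc_cong R (\<phi> (nc_add x y)) (nc_add (\<phi> x) (\<phi> y))) \<and>
     (\<forall>x\<in>S1. \<forall>y\<in>S1. nc_cong R (\<phi> (nc_mult x y)) (nc_mult (\<phi> x) (\<phi> y))) \<and>
     (\<forall>c. \<forall>x\<in>S1. nc_cong R (\<phi> (nc_smult c x)) (nc_smult c (\<phi> x))))"

text \<open>U^+ = k<e1,e2>/(S1,S2), with e1 = x_0, e2 = x_1.\<close>
definition E1 :: "'k::field nca" where "E1 = nc_var 0"
definition E2 :: "'k::field nca" where "E2 = nc_var 1"

definition rel_S1 :: "'k::field \<Rightarrow> 'k nca" where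
  "rel_S1 q = nc_add
     (nc_diff (nc_mult E1 (nc_mult E1 E2))
              (nc_smult (q^2 + inverse (q^2)) (nc_mult E1 (nc_mult E2 E1))))
     (nc_mult E2 (nc_mult E1 E1))"

definition rel_S2 :: "'k::field \<Rightarrow> 'k nca" where
  "rel_S2 q = nc_diff
     (nc_add
       (nc_diff (nc_mult E2 (nc_mult E2 (nc_mult E2 E1)))
                (nc_smult (q^2 + 1 + inverse (q^2)) (nc_mult E2 (nc_mult E2 (nc_mult E1 E2)))))
       (nc_smult (q^2 + 1 + inverse (q^2)) (nc_mult E2 (nc_mult E1 (nc_mult E2 E2)))))
     (nc_mult E1 (nc_mult E2 (nc_mult E2 E2)))"

definition Uplus_rels :: "'k::field \<Rightarrow> 'k nca set" where
  "Uplus_rels q = {rel_S1 q, rel_S2 q}"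

definition E3 :: "'k::field \<Rightarrow> 'k nca" where
  "E3 q = nc_diff (nc_mult E1 E2) (nc_smult (q^2) (nc_mult E2 E1))"
definition W :: "'k::field \<Rightarrow> 'k nca" where
  "W q = nc_diff (nc_mult E2 (E3 q)) (nc_mult (E3 q) E2)"
definition E3bar :: "'k::field \<Rightarrow> 'k nca" where
  "E3bar q = nc_diff (nc_mult E1 E2) (nc_smult (inverse (q^2)) (nc_mult E2 E1))"
definition Wbar :: "'k::field \<Rightarrow> 'k nca" where
  "Wbar q = nc_diff (nc_mult E2 (E3bar q)) (nc_mult (E3bar q) E2)"

end

theory Submission
  imports Defs
begin

(* Write \<epsilon>(f) = f [] for the constant term. An \<epsilon>-derivation D of a quotient algebra,
   i.e. a linear functional with D(fg) = \<epsilon>(f) D(g) + D(f) \<epsilon>(g), is determined by its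
   values on generators. As w = e2 e3 - e3 e2, the first algebra is generated by e2 and e3,
   so any three \<epsilon>-derivations of it are linearly dependent. On the second algebra the
   coefficients of e1, e1 e2 and e1 e2^2 are \<epsilon>-derivations: no element of it involves
   the monomials e2 or e2^2, and the relations S1, S2 have no terms of degree < 3 and no
   e1 e2^2 term. They are independent, being separated by e1, e3bar and wbar. The argument
   works for every field and every q. *)

lemma nc_var_apply: "nc_var i w = (if w = [i] then 1 else 0)"
  and nc_add_apply: "nc_add f g w = f w + g w"
  and nc_diff_apply: "nc_diff f g w = f w - g w"
  and nc_smult_apply: "nc_smult c f w = c * f w"
  by (simp_all add: nc_var_def nc_add_def nc_diff_def nc_smult_def)

lemmas nc_apply_simps = nc_var_apply nc_add_apply nc_diff_apply nc_smult_apply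

lemma nc_diff_eq_add_smult: "nc_diff f g = nc_add f (nc_smult (- 1) g)"
  by (simp add: fun_eq_iff nc_apply_simps)

lemma nc_mult_Nil [simp]: "nc_mult f g [] = f [] * g []"
  by (simp add: nc_mult_def)

lemma nc_mult_Cons [simp]:
  "nc_mult f g (a # w) = f [] * g (a # w) + nc_mult (\<lambda>v. f (a # v)) g w"
  unfolding nc_mult_def length_Cons sum.atMost_Suc_shift by simp

lemma nc_mult_eq_boundary_terms:
  assumes "u \<noteq> []" and "\<And>i. 0 < i \<Longrightarrow> i < length u \<Longrightarrow> f (take i u) * g (drop i u) = 0"
  shows "nc_mult f g u = f [] * g u + f u * g []"
proof -
  obtain n where n: "length u = Suc n" using assms(1) by (cases u) auto
  define t where "t i = f (take i u) * g (drop i u)" for i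
  have "nc_mult f g u = (\<Sum>i\<le>n. t i) + t (Suc n)"
    unfolding nc_mult_def n t_def by (rule sum.atMost_Suc)
  also have "(\<Sum>i\<le>n. t i) = t 0 + (\<Sum>i<n. t (Suc i))"
    by (rule sum.atMost_shift)
  also have "(\<Sum>i<n. t (Suc i)) = 0"
    using assms(2) n by (intro sum.neutral) (auto simp: t_def)
  finally show ?thesis using n by (simp add: t_def)
qed

definition nc_vanishes_below :: "nat \<Rightarrow> 'k::field nca \<Rightarrow> bool" where
  "nc_vanishes_below n f \<longleftrightarrow> (\<forall>w. length w < n \<longrightarrow> f w = 0)"

lemma nc_vanishes_below_mult_left:
  "nc_vanishes_below n f \<Longrightarrow> nc_vanishes_below n (nc_mult f g)"
  unfolding nc_vanishes_below_def nc_mult_def by (auto intro!: sum.neutral)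

lemma nc_vanishes_below_mult_right:
  "nc_vanishes_below n g \<Longrightarrow> nc_vanishes_below n (nc_mult f g)"
  unfolding nc_vanishes_below_def nc_mult_def by (auto intro!: sum.neutral)

lemma nc_mult_eq_first_term:
  assumes "nc_vanishes_below (length u) g"
  shows "nc_mult f g u = f [] * g u"
proof -
  have "(\<Sum>i<length u. f (take (Suc i) u) * g (drop (Suc i) u)) = 0"
    using assms by (intro sum.neutral) (auto simp: nc_vanishes_below_def)
  then show ?thesis by (simp add: nc_mult_def sum.atMost_shift)
qed

lemma nc_mult_eq_last_term:
  assumes "nc_vanishes_below (length u) f"
  shows "nc_mult f g u = f u * g []"
proof -
  have "(\<Sum>i<length u. f (take i u) * g (drop i u)) = 0"
    using assms by (intro sum.neutral) (auto simp: nc_vanishes_below_def)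
  then show ?thesis by (simp add: nc_mult_def lessThan_Suc_atMost[symmetric])
qed

lemma nc_ideal_vanishes_at:
  assumes short: "\<And>r. r \<in> R \<Longrightarrow> nc_vanishes_below (length u) r"
    and at: "\<And>r. r \<in> R \<Longrightarrow> r u = 0"
    and x: "x \<in> nc_ideal R"
  shows "x u = 0"
proof -
  from x have "nc_vanishes_below (length u) x \<and> x u = 0"
  proof (induction rule: nc_ideal.induct)
    case (gen r)
    then show ?case using short at by blast
  next
    case zero
    then show ?case by (simp add: nc_vanishes_below_def nc_zero_def)
  next
    case (add a b)
    then show ?case by (simp add: nc_vanishes_below_def nc_add_apply)
  next
    case (smult a c)
    then show ?case by (simp add: nc_vanishes_below_def nc_smult_apply)
  next
    case (lmult a b)
    then show ?case by (simp add: nc_vanishes_below_mult_right nc_mult_eq_first_term)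
  next
    case (rmult a b)
    then show ?case by (simp add: nc_vanishes_below_mult_left nc_mult_eq_last_term)
  qed
  then show ?thesis ..
qed

lemma nc_subalg_least:
  assumes "G \<subseteq> nc_subalg H"
  shows "nc_subalg G \<subseteq> nc_subalg H"
proof
  fix x assume "x \<in> nc_subalg G"
  then show "x \<in> nc_subalg H"
    by induction (use assms in \<open>auto intro: nc_subalg.intros\<close>)
qed

lemma nc_subalg_insert_absorb:
  assumes "g \<in> nc_subalg G"
  shows "nc_subalg (insert g G) = nc_subalg G"
proof
  show "nc_subalg (insert g G) \<subseteq> nc_subalg G"
    using assms by (intro nc_subalg_least) (auto intro: nc_subalg.gen)
  show "nc_subalg G \<subseteq> nc_subalg (insert g G)"
    by (intro nc_subalg_least) (auto intro: nc_subalg.gen)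
qed

lemma nc_subalg_vanishes_on:
  assumes "[] \<notin> Z"
    and prefix_closed: "\<And>w i. w \<in> Z \<Longrightarrow> 0 < i \<Longrightarrow> take i w \<in> Z"
    and gens: "\<And>g w. g \<in> G \<Longrightarrow> w \<in> Z \<Longrightarrow> g w = 0"
    and "x \<in> nc_subalg G" "w \<in> Z"
  shows "x w = 0"
  using assms(4,5)
proof (induction arbitrary: w rule: nc_subalg.induct)
  case one
  then show ?case using assms(1) by (auto simp: nc_one_def)
next
  case (gen g)
  then show ?case by (rule gens)
next
  case (add a b)
  then show ?case by (simp add: nc_add_apply)
next
  case (smult a c)
  then show ?case by (simp add: nc_smult_apply)
next
  case (mult a b)
  have "a (take i w) * b (drop i w) = 0" for i
    using mult prefix_closed by (cases "i = 0") auto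
  then show ?case unfolding nc_mult_def by (simp add: sum.neutral)
qed

definition nc_eps_derivation :: "'k::field nca set \<Rightarrow> 'k nca set \<Rightarrow> ('k nca \<Rightarrow> 'k) \<Rightarrow> bool" where
  "nc_eps_derivation R S D \<longleftrightarrow>
     (\<forall>x y. nc_cong R x y \<longrightarrow> D x = D y) \<and>
     (\<forall>f g. D (nc_add f g) = D f + D g) \<and>
     (\<forall>c f. D (nc_smult c f) = c * D f) \<and>
     D nc_one = 0 \<and>
     (\<forall>f\<in>S. \<forall>g\<in>S. D (nc_mult f g) = f [] * D g + D f * g [])"

lemma nc_eps_derivation_add:
  "nc_eps_derivation R S D \<Longrightarrow> nc_eps_derivation R S D' \<Longrightarrow>
    nc_eps_derivation R S (\<lambda>f. D f + D' f)"
  by (simp add: nc_eps_derivation_def algebra_simps)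

lemma nc_eps_derivation_scale:
  "nc_eps_derivation R S D \<Longrightarrow> nc_eps_derivation R S (\<lambda>f. c * D f)"
  by (simp add: nc_eps_derivation_def algebra_simps)

lemma nc_eps_derivation_coeff:
  assumes "u \<noteq> []"
    and ideal: "\<And>x. x \<in> nc_ideal R \<Longrightarrow> x u = 0"
    and suffixes: "\<And>g i. g \<in> S \<Longrightarrow> 0 < i \<Longrightarrow> i < length u \<Longrightarrow> g (drop i u) = 0"
  shows "nc_eps_derivation R S (\<lambda>f. f u)"
  unfolding nc_eps_derivation_def
proof (intro conjI allI impI ballI)
  fix x y assume "nc_cong R x y"
  then have "nc_diff x y u = 0" unfolding nc_cong_def by (rule ideal)
  then show "x u = y u" by (simp add: nc_diff_apply)
next
  fix f g assume "g \<in> S"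
  then show "nc_mult f g u = f [] * g u + f u * g []"
    using assms(1) suffixes by (intro nc_mult_eq_boundary_terms) auto
qed (use assms(1) in \<open>simp_all add: nc_add_apply nc_smult_apply nc_one_def\<close>)

lemma nc_quot_iso_eps_derivation_determined:
  assumes "nc_quot_iso R (nc_subalg G) S"
  obtains \<phi> where "\<And>D z. nc_eps_derivation R S D \<Longrightarrow> (\<And>g. g \<in> G \<Longrightarrow> D (\<phi> g) = 0) \<Longrightarrow>
    z \<in> S \<Longrightarrow> D z = 0"
proof -
  let ?A = "nc_subalg G"
  from assms obtain \<phi> where
    hom_into: "\<forall>x\<in>?A. \<phi> x \<in> S" and
    hom_onto: "\<forall>z\<in>S. \<exists>x\<in>?A. nc_cong R z (\<phi> x)" and
    hom_one: "nc_cong R (\<phi> nc_one) nc_one" and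
    hom_add: "\<forall>x\<in>?A. \<forall>y\<in>?A. nc_cong R (\<phi> (nc_add x y)) (nc_add (\<phi> x) (\<phi> y))" and
    hom_mult: "\<forall>x\<in>?A. \<forall>y\<in>?A. nc_cong R (\<phi> (nc_mult x y)) (nc_mult (\<phi> x) (\<phi> y))" and
    hom_smult: "\<forall>c. \<forall>x\<in>?A. nc_cong R (\<phi> (nc_smult c x)) (nc_smult c (\<phi> x))"
    unfolding nc_quot_iso_def by blast
  have "D z = 0" if D: "nc_eps_derivation R S D" and gens: "\<And>g. g \<in> G \<Longrightarrow> D (\<phi> g) = 0"
    and "z \<in> S" for D z
  proof -
    have D_cong: "nc_cong R x y \<Longrightarrow> D x = D y" for x y
      using D by (simp add: nc_eps_derivation_def)
    have D_add: "D (nc_add f g) = D f + D g" and D_smult: "D (nc_smult c f) = c * D f"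
      and D_one: "D nc_one = 0"
      and D_mult: "f \<in> S \<Longrightarrow> g \<in> S \<Longrightarrow> D (nc_mult f g) = f [] * D g + D f * g []" for f g c
      using D by (simp_all add: nc_eps_derivation_def)
    have "D (\<phi> x) = 0" if "x \<in> ?A" for x
      using that
    proof (induction rule: nc_subalg.induct)
      case one
      show ?case using D_cong[OF hom_one] D_one by simp
    next
      case (gen g)
      then show ?case by (rule gens)
    next
      case (add x y)
      then have "D (\<phi> (nc_add x y)) = D (nc_add (\<phi> x) (\<phi> y))"
        using hom_add by (blast intro: D_cong)
      then show ?case using add.IH by (simp add: D_add)
    next
      case (smult x c)
      then have "D (\<phi> (nc_smult c x)) = D (nc_smult c (\<phi> x))"
        using hom_smult by (blast intro: D_cong)
      then show ?case using smult.IH by (simp add: D_smult)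
    next
      case (mult x y)
      then have "D (\<phi> (nc_mult x y)) = D (nc_mult (\<phi> x) (\<phi> y))"
        using hom_mult by (blast intro: D_cong)
      then show ?case using mult hom_into by (simp add: D_mult)
    qed
    moreover obtain x where "x \<in> ?A" "nc_cong R z (\<phi> x)" using hom_onto \<open>z \<in> S\<close> by blast
    ultimately show ?thesis using D_cong by simp
  qed
  then show thesis using that by blast
qed

lemma homogeneous_system_2x3_nontrivial_solution:
  fixes a1 b1 c1 a2 b2 c2 :: "'k::field"
  obtains a b c where "a \<noteq> 0 \<or> b \<noteq> 0 \<or> c \<noteq> 0"
    "a1 * a + b1 * b + c1 * c = 0" "a2 * a + b2 * b + c2 * c = 0"
proof (cases "b1 * c2 - c1 * b2 \<noteq> 0 \<or> c1 * a2 - a1 * c2 \<noteq> 0 \<or> a1 * b2 - b1 * a2 \<noteq> 0")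
  case True
  show thesis
    by (rule that[of "b1 * c2 - c1 * b2" "c1 * a2 - a1 * c2" "a1 * b2 - b1 * a2"])
      (use True in \<open>simp_all add: algebra_simps\<close>)
next
  case False
  then have parallel: "a1 * b2 = b1 * a2" by auto
  show thesis
  proof (cases "a1 = 0 \<and> b1 = 0")
    case False
    then show thesis using parallel
      by (intro that[of b1 "- a1" 0]) (auto simp: algebra_simps)
  next
    case True
    then show thesis
      by (cases "a2 = 0 \<and> b2 = 0")
        (auto intro: that[of 1 0 0] that[of b2 "- a2" 0] simp: algebra_simps)
  qed
qed

lemma W_in_subalg_E2_E3: "W q \<in> nc_subalg {E2, E3 q}"
  unfolding W_def nc_diff_eq_add_smult
  by (intro nc_subalg.add nc_subalg.smult nc_subalg.mult nc_subalg.gen) auto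

lemma subalg_E2_W_E3_eq: "nc_subalg {E2, W q, E3 q} = nc_subalg {E2, E3 q}"
proof -
  have "{E2, W q, E3 q} = insert (W q) {E2, E3 q}" by auto
  then show ?thesis using nc_subalg_insert_absorb[OF W_in_subalg_E2_E3] by simp
qed

lemma Uplus_rels_vanish:
  assumes "r \<in> Uplus_rels q"
  shows "nc_vanishes_below 3 r" and "r [0, 1, 1] = 0"
  using assms
  by (auto simp: nc_apply_simps Uplus_rels_def rel_S1_def rel_S2_def E1_def E2_def nc_vanishes_below_def
      numeral_3_eq_3 less_Suc_eq length_Suc_conv)

lemma Uplus_ideal_coeff_zero:
  assumes "x \<in> nc_ideal (Uplus_rels q)" and "u \<in> {[0], [0, 1], [0, 1, 1]}"
  shows "x u = 0"
proof (rule nc_ideal_vanishes_at[OF _ _ assms(1)])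
  fix r assume r: "r \<in> Uplus_rels q"
  have "length u \<le> 3" using assms(2) by auto
  with Uplus_rels_vanish(1)[OF r] show "nc_vanishes_below (length u) r"
    by (simp add: nc_vanishes_below_def)
  show "r u = 0"
    using assms(2) Uplus_rels_vanish[OF r] by (auto simp: nc_vanishes_below_def)
qed

lemma subalg_E1_E3bar_Wbar_coeff_zero:
  assumes "g \<in> nc_subalg {E1, E3bar q, Wbar q}" and "w \<in> {[1], [1, 1]}"
  shows "g w = 0"
proof (rule nc_subalg_vanishes_on[OF _ _ _ assms])
  show "take i v \<in> {[1], [1, 1]}" if "v \<in> {[1], [1, 1]}" "0 < i" for v i
    using that by (cases i; cases "i - 1") auto
qed (auto simp: nc_apply_simps E1_def E2_def E3bar_def Wbar_def)

lemma Uplus_eps_derivation_coeff: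
  assumes "u \<in> {[0], [0, 1], [0, 1, 1]}"
  shows "nc_eps_derivation (Uplus_rels q) (nc_subalg {E1, E3bar q, Wbar q}) (\<lambda>f. f u)"
proof (rule nc_eps_derivation_coeff)
  show "u \<noteq> []" using assms by auto
  show "x u = 0" if "x \<in> nc_ideal (Uplus_rels q)" for x
    using that assms by (rule Uplus_ideal_coeff_zero)
  fix g i assume g: "g \<in> nc_subalg {E1, E3bar q, Wbar q}" and "0 < i" "i < length u"
  with assms have "drop i u \<in> {[1], [1, 1]}"
    by (auto simp: drop_Cons' less_Suc_eq)
  with g show "g (drop i u) = 0" by (rule subalg_E1_E3bar_Wbar_coeff_zero)
qed

theorem mainTheorem18:
  fixes q :: "'k::field_char_0"
  assumes alg_closed: "\<forall>p :: 'k poly. degree p > 0 \<longrightarrow> (\<exists>x. poly p x = 0)"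
    and q_nz: "q \<noteq> 0"
    and q_not_root_of_unity: "\<forall>n::nat. n > 0 \<longrightarrow> q ^ n \<noteq> 1"
  shows "\<not> nc_quot_iso (Uplus_rels q)
            (nc_subalg {E2, W q, E3 q})
            (nc_subalg {E1, E3bar q, Wbar q})"
proof
  let ?R = "Uplus_rels q" and ?B = "nc_subalg {E1, E3bar q, Wbar q}"
  assume "nc_quot_iso ?R (nc_subalg {E2, W q, E3 q}) ?B"
  then have "nc_quot_iso ?R (nc_subalg {E2, E3 q}) ?B" by (simp only: subalg_E2_W_E3_eq)
  then obtain \<phi> where determined: "\<And>D z. nc_eps_derivation ?R ?B D \<Longrightarrow>
      (\<And>g. g \<in> {E2, E3 q} \<Longrightarrow> D (\<phi> g) = 0) \<Longrightarrow> z \<in> ?B \<Longrightarrow> D z = 0"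
    by (rule nc_quot_iso_eps_derivation_determined) blast
  obtain a b c where nonzero: "a \<noteq> 0 \<or> b \<noteq> 0 \<or> c \<noteq> 0"
    and "\<phi> E2 [0] * a + \<phi> E2 [0, 1] * b + \<phi> E2 [0, 1, 1] * c = 0"
    and "\<phi> (E3 q) [0] * a + \<phi> (E3 q) [0, 1] * b + \<phi> (E3 q) [0, 1, 1] * c = 0"
    by (rule homogeneous_system_2x3_nontrivial_solution)
  then have kills_gens: "a * \<phi> g [0] + b * \<phi> g [0, 1] + c * \<phi> g [0, 1, 1] = 0"
    if "g \<in> {E2, E3 q}" for g
    using that by (auto simp: algebra_simps)
  have "nc_eps_derivation ?R ?B (\<lambda>f. a * f [0] + b * f [0, 1] + c * f [0, 1, 1])"
    by (intro nc_eps_derivation_add nc_eps_derivation_scale Uplus_eps_derivation_coeff) auto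
  from determined[OF this kills_gens] have "a * z [0] + b * z [0, 1] + c * z [0, 1, 1] = 0"
    if "z \<in> ?B" for z
    using that by blast
  from this[of E1] this[of "E3bar q"] this[of "Wbar q"] show False
    using nonzero by (auto intro: nc_subalg.gen simp: nc_apply_simps E1_def E2_def E3bar_def Wbar_def)
qed

end
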